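(* With the natural actions of the symmetric groups, the maps $\phi^0$ and $\phi^1$ are injective morphisms of symmetric set-operads from $\mathcal{FF}^\Sigma$ to the symmetric set-operads underlying $\mathrm{Mould}_0^\Sigma$ and $\mathrm{Mould}_1^\Sigma$, respectively.
   Context: $\mathcal{FF}(n)$ is the set of reduced formal fractions whose numerator and denominator are products of symbols $[S]$, $\emptyset\ne S\subseteq\{1,\dots,n\}$, i.e. the free abelian group written multiplicatively on these symbols. For $F\in\mathcal{FF}(m)$, $G\in\mathcal{FF}(n)$: $F\circ_i G=[S_{i,n}]\,F(1,\dots,i-1,S_{i,n},i+n,\dots,m+n-1)\,G(i,\dots,i+n-1)$, where $S_{i,n}=\{i,\dots,i+n-1\}$ and $F(A_1,\dots,A_m)$ replaces each $[S]$ by $[\bigcup_{k\in S}A_k]$. $\mathcal{FF}^\Sigma$ is $\mathcal{FF}$ with $\sigma\in S_n$ acting by $[S]\mapsto[\sigma(S)]$. $\mathrm{Mould}_0(n)=\mathrm{Mould}_1(n)=\mathbb{Q}(u_1,\dots,u_n)$ with compositions $F\circ_iG=\Sigma_{i,n}F(u_1,\dots,u_{i-1},\Sigma_{i,n},u_{i+n},\dots,u_{m+n-1})G(u_i,\dots,u_{i+n-1})$, $\Sigma_{i,n}=u_i+\dots+u_{i+n-1}$ (for $\mathrm{Mould}_0$), and $F\circ_iG=(\Pi_{i,n}-1)F(u_1,\dots,u_{i-1},\Pi_{i,n},u_{i+n},\dots,u_{m+n-1})G(u_i,\dots,u_{i+n-1})$, $\Pi_{i,n}=u_i\cdots u_{i+n-1}$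 (for $\mathrm{Mould}_1$); $S_n$ acts by permuting the variables $u_1,\dots,u_n$; the superscript $\Sigma$ denotes these symmetric operads. $\phi^0([S])=\sum_{j\in S}u_j$ and $\phi^1([S])=\prod_{j\in S}u_j-1$, extended multiplicatively. *)

theory Defs
  imports Complex_Main "HOL-Library.Poly_Mapping" "HOL-Computational_Algebra.Fraction_Field"
          "HOL-Combinatorics.Permutations"
begin

text \<open>A reduced formal fraction is an element of the free abelian group (written
  multiplicatively) on the symbols [S]; we encode it by its finitely supported exponent
  function S \<mapsto> exponent of [S]. The group product is the sum of exponent functions.\<close>

type_synonym ff = "nat set \<Rightarrow>\<^sub>0 int"

definition FF :: "nat \<Rightarrow> ff set" where
  "FF n = {F. \<forall>S\<in>Poly_Mapping.keys F. S \<noteq> {} \<and> S \<subseteq> {1..n}}"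

definition ff_rename :: "(nat set \<Rightarrow> nat set) \<Rightarrow> ff \<Rightarrow> ff" where
  "ff_rename g F = (\<Sum>S\<in>Poly_Mapping.keys F. Poly_Mapping.single (g S) (Poly_Mapping.lookup F S))"

definition Sint :: "nat \<Rightarrow> nat \<Rightarrow> nat set" where
  "Sint i n = {i..i + n - 1}"

text \<open>The sets A_1,...,A_m used in F(1,...,i-1,S_{i,n},i+n,...,m+n-1).\<close>
definition ff_blocks :: "nat \<Rightarrow> nat \<Rightarrow> nat \<Rightarrow> nat set" where
  "ff_blocks i n k = (if k < i then {k} else if k = i then Sint i n else {k + n - 1})"

definition ff_comp :: "nat \<Rightarrow> ff \<Rightarrow> nat \<Rightarrow> ff \<Rightarrow> ff" where
  "ff_comp i F n G =
     Poly_Mapping.single (Sint i n) 1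
     + ff_rename (\<lambda>S. \<Union>k\<in>S. ff_blocks i n k) F
     + ff_rename (\<lambda>S. (\<lambda>j. j + i - 1) ` S) G"

definition ff_act :: "(nat \<Rightarrow> nat) \<Rightarrow> ff \<Rightarrow> ff" where
  "ff_act \<sigma> F = ff_rename (\<lambda>S. \<sigma> ` S) F"

type_synonym mpoly = "(nat \<Rightarrow>\<^sub>0 nat) \<Rightarrow>\<^sub>0 rat"
type_synonym ratfun = "mpoly fract"

definition mvar :: "nat \<Rightarrow> mpoly" where
  "mvar j = Poly_Mapping.single (Poly_Mapping.single j 1) 1"

definition mconst :: "rat \<Rightarrow> mpoly" where
  "mconst c = Poly_Mapping.single 0 c"

definition mvars :: "mpoly \<Rightarrow> nat set" where
  "mvars p = \<Union> (Poly_Mapping.keys ` Poly_Mapping.keys p)"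

definition u :: "nat \<Rightarrow> ratfun" where
  "u j = Fract (mvar j) 1"

text \<open>Mould(n) = Q(u_1,...,u_n), as a subfield of Q(u_0,u_1,u_2,...).\<close>
definition Mould :: "nat \<Rightarrow> ratfun set" where
  "Mould n = {x. \<exists>a b. b \<noteq> 0 \<and> mvars a \<subseteq> {1..n} \<and> mvars b \<subseteq> {1..n} \<and> x = Fract a b}"

definition poly_subst :: "(nat \<Rightarrow> ratfun) \<Rightarrow> mpoly \<Rightarrow> ratfun" where
  "poly_subst s p =
     (\<Sum>m\<in>Poly_Mapping.keys p. Fract (mconst (Poly_Mapping.lookup p m)) 1 * (\<Prod>v\<in>Poly_Mapping.keys m. s v ^ Poly_Mapping.lookup m v))"

definition rf_subst :: "(nat \<Rightarrow> ratfun) \<Rightarrow> ratfun \<Rightarrow> ratfun" where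
  "rf_subst s x = (SOME r. \<exists>a b. b \<noteq> 0 \<and> x = Fract a b \<and> r = poly_subst s a / poly_subst s b)"

definition Sigma_in :: "nat \<Rightarrow> nat \<Rightarrow> ratfun" where
  "Sigma_in i n = (\<Sum>j\<in>Sint i n. u j)"

definition Pi_in :: "nat \<Rightarrow> nat \<Rightarrow> ratfun" where
  "Pi_in i n = (\<Prod>j\<in>Sint i n. u j)"

definition mould_comp_gen :: "ratfun \<Rightarrow> ratfun \<Rightarrow> nat \<Rightarrow> ratfun \<Rightarrow> nat \<Rightarrow> ratfun \<Rightarrow> ratfun" where
  "mould_comp_gen P Q i F n G =
     P * rf_subst (\<lambda>k. if k < i then u k else if k = i then Q else u (k + n - 1)) F
       * rf_subst (\<lambda>j. u (j + i - 1)) G"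

definition mould0_comp :: "nat \<Rightarrow> ratfun \<Rightarrow> nat \<Rightarrow> ratfun \<Rightarrow> ratfun" where
  "mould0_comp i F n G = mould_comp_gen (Sigma_in i n) (Sigma_in i n) i F n G"

definition mould1_comp :: "nat \<Rightarrow> ratfun \<Rightarrow> nat \<Rightarrow> ratfun \<Rightarrow> ratfun" where
  "mould1_comp i F n G = mould_comp_gen (Pi_in i n - 1) (Pi_in i n) i F n G"

definition mould_act :: "(nat \<Rightarrow> nat) \<Rightarrow> ratfun \<Rightarrow> ratfun" where
  "mould_act \<sigma> x = rf_subst (\<lambda>j. u (\<sigma> j)) x"

definition phi_gen :: "(nat set \<Rightarrow> ratfun) \<Rightarrow> ff \<Rightarrow> ratfun" where
  "phi_gen f F = (\<Prod>S\<in>Poly_Mapping.keys F. f S powi Poly_Mapping.lookup F S)"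

definition phi0 :: "ff \<Rightarrow> ratfun" where
  "phi0 = phi_gen (\<lambda>S. \<Sum>j\<in>S. u j)"

definition phi1 :: "ff \<Rightarrow> ratfun" where
  "phi1 = phi_gen (\<lambda>S. (\<Prod>j\<in>S. u j) - 1)"

definition injective_sym_operad_morphism ::
  "(ff \<Rightarrow> ratfun) \<Rightarrow> (nat \<Rightarrow> ratfun \<Rightarrow> nat \<Rightarrow> ratfun \<Rightarrow> ratfun) \<Rightarrow> bool" where
  "injective_sym_operad_morphism \<phi> cmp \<longleftrightarrow>
     (\<forall>n\<ge>1. \<forall>F\<in>FF n. \<phi> F \<in> Mould n)
   \<and> \<phi> 0 = 1
   \<and> (\<forall>m\<ge>1. \<forall>n\<ge>1. \<forall>i\<in>{1..m}. \<forall>F\<in>FF m. \<forall>G\<in>FF n.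
        \<phi> (ff_comp i F n G) = cmp i (\<phi> F) n (\<phi> G))
   \<and> (\<forall>n\<ge>1. \<forall>\<sigma>. \<sigma> permutes {1..n} \<longrightarrow> (\<forall>F\<in>FF n. \<phi> (ff_act \<sigma> F) = mould_act \<sigma> (\<phi> F)))
   \<and> (\<forall>n\<ge>1. inj_on \<phi> (FF n))"

end

theory Submission
  imports Defs "HOL-Computational_Algebra.Polynomial_Factorial"
begin

text \<open>Both maps send a symbol \<open>[S]\<close> to the image in \<open>\<rat>(u)\<close> of a polynomial \<open>L(S)\<close>: the
  sum of the \<open>u_j\<close>, \<open>j \<in> S\<close>, respectively their product minus one. Compatibility with the
  symmetric action and with the partial compositions then reduces to a single substitution
  identity: replacing each \<open>u_k\<close> by the sum (respectively product) of the variables of pairwise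
  disjoint blocks \<open>B_k\<close> turns \<open>L(S)\<close> into \<open>L\<close> of the union of the \<open>B_k\<close>, \<open>k \<in> S\<close>; and the
  extra factor \<open>[S_{i,n}]\<close> is the prefactor \<open>\<Sigma>_{i,n}\<close> (respectively \<open>\<Pi>_{i,n} - 1\<close>) of the
  mould composition. The substitutions involved have polynomial left inverses, so they extend to
  rational functions.

  For injectivity, \<open>\<phi>(F) = \<phi>(G)\<close> becomes, after clearing denominators, an identity between
  products of powers of the polynomials \<open>L(S)\<close> with disjointly supported exponents. Take \<open>S_0\<close>
  inclusion-minimal among the symbols whose exponents differ, and a real point where \<open>L(S_0)\<close>
  vanishes but no \<open>L(T)\<close> with \<open>T\<close> not contained in \<open>S_0\<close> does: at that point exactly one
  side of the identity vanishes.\<close>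

section \<open>Evaluation of polynomials\<close>

definition is_ring_hom :: "('a::comm_ring_1 \<Rightarrow> 'b::comm_ring_1) \<Rightarrow> bool" where
  "is_ring_hom h \<longleftrightarrow>
     h 0 = 0 \<and> h 1 = 1 \<and> (\<forall>a b. h (a + b) = h a + h b) \<and> (\<forall>a b. h (a * b) = h a * h b)"

lemma ring_hom_sum: "is_ring_hom h \<Longrightarrow> h (\<Sum>x\<in>A. f x) = (\<Sum>x\<in>A. h (f x))"
  by (induction A rule: infinite_finite_induct) (auto simp: is_ring_hom_def)

lemma ring_hom_prod: "is_ring_hom h \<Longrightarrow> h (\<Prod>x\<in>A. f x) = (\<Prod>x\<in>A. h (f x))"
  by (induction A rule: infinite_finite_induct) (auto simp: is_ring_hom_def)

lemma ring_hom_power: "is_ring_hom h \<Longrightarrow> h (x ^ k) = h x ^ k"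
  by (induction k) (auto simp: is_ring_hom_def)

lemma ring_hom_diff: "is_ring_hom h \<Longrightarrow> h (x - y) = h x - h y"
  unfolding is_ring_hom_def by (metis diff_add_cancel add_diff_cancel)

lemma is_ring_hom_to_fract: "is_ring_hom to_fract"
  by (simp add: is_ring_hom_def)

lemma is_ring_hom_mconst: "is_ring_hom mconst"
  by (simp add: is_ring_hom_def mconst_def single_add mult_single)

lemma is_ring_hom_of_rat: "is_ring_hom (of_rat :: rat \<Rightarrow> 'a::field_char_0)"
  by (simp add: is_ring_hom_def of_rat_add of_rat_mult)

definition monom_eval :: "(nat \<Rightarrow> 'a::comm_ring_1) \<Rightarrow> (nat \<Rightarrow>\<^sub>0 nat) \<Rightarrow> 'a" where
  "monom_eval s m = (\<Prod>v\<in>Poly_Mapping.keys m. s v ^ Poly_Mapping.lookup m v)"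

definition mpoly_eval :: "(rat \<Rightarrow> 'a::comm_ring_1) \<Rightarrow> (nat \<Rightarrow> 'a) \<Rightarrow> mpoly \<Rightarrow> 'a" where
  "mpoly_eval h s p =
     (\<Sum>m\<in>Poly_Mapping.keys p. h (Poly_Mapping.lookup p m) * monom_eval s m)"

lemma monom_eval_superset:
  assumes "finite K" "Poly_Mapping.keys m \<subseteq> K"
  shows "monom_eval s m = (\<Prod>v\<in>K. s v ^ Poly_Mapping.lookup m v)"
  unfolding monom_eval_def
  by (rule prod.mono_neutral_left) (use assms in \<open>auto simp: in_keys_iff\<close>)

lemma monom_eval_add: "monom_eval s (a + b) = monom_eval s a * monom_eval s b"
proof -
  let ?K = "Poly_Mapping.keys a \<union> Poly_Mapping.keys b"
  have "monom_eval s (a + b) = (\<Prod>v\<in>?K. s v ^ Poly_Mapping.lookup (a + b) v)"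
    by (rule monom_eval_superset) (auto simp: keys_add)
  also have "\<dots> = (\<Prod>v\<in>?K. s v ^ Poly_Mapping.lookup a v) * (\<Prod>v\<in>?K. s v ^ Poly_Mapping.lookup b v)"
    by (simp add: lookup_add power_add prod.distrib)
  finally show ?thesis
    by (simp add: monom_eval_superset[of ?K])
qed

lemma mpoly_eval_superset:
  assumes "finite K" "Poly_Mapping.keys p \<subseteq> K" "h 0 = 0"
  shows "mpoly_eval h s p = (\<Sum>m\<in>K. h (Poly_Mapping.lookup p m) * monom_eval s m)"
  unfolding mpoly_eval_def
  by (rule sum.mono_neutral_left) (use assms in \<open>auto simp: in_keys_iff\<close>)

lemma mpoly_eval_add:
  assumes "is_ring_hom h"
  shows "mpoly_eval h s (p + q) = mpoly_eval h s p + mpoly_eval h s q"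
proof -
  have h0: "h 0 = 0" and h_add: "\<And>a b. h (a + b) = h a + h b"
    using assms by (auto simp: is_ring_hom_def)
  let ?K = "Poly_Mapping.keys p \<union> Poly_Mapping.keys q"
  have "mpoly_eval h s (p + q) = (\<Sum>m\<in>?K. h (Poly_Mapping.lookup (p + q) m) * monom_eval s m)"
    by (rule mpoly_eval_superset) (auto simp: keys_add h0)
  also have "\<dots> = (\<Sum>m\<in>?K. h (Poly_Mapping.lookup p m) * monom_eval s m)
                + (\<Sum>m\<in>?K. h (Poly_Mapping.lookup q m) * monom_eval s m)"
    by (simp add: lookup_add h_add distrib_right sum.distrib)
  finally show ?thesis
    by (simp add: mpoly_eval_superset[of ?K] h0)
qed

lemma mpoly_eval_single:
  "is_ring_hom h \<Longrightarrow> mpoly_eval h s (Poly_Mapping.single m c) = h c * monom_eval s m"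
  by (cases "c = 0") (auto simp: mpoly_eval_def is_ring_hom_def)

lemma mpoly_eval_0 [simp]: "mpoly_eval h s 0 = 0"
  by (simp add: mpoly_eval_def)

lemma mpoly_eval_1 [simp]: "is_ring_hom h \<Longrightarrow> mpoly_eval h s 1 = 1"
  by (simp add: mpoly_eval_def monom_eval_def is_ring_hom_def)

lemma mpoly_eval_sum:
  "is_ring_hom h \<Longrightarrow> mpoly_eval h s (\<Sum>x\<in>A. f x) = (\<Sum>x\<in>A. mpoly_eval h s (f x))"
  by (induction A rule: infinite_finite_induct) (auto simp: mpoly_eval_add)

lemma poly_mapping_sum_single:
  "p = (\<Sum>m\<in>Poly_Mapping.keys p. Poly_Mapping.single m (Poly_Mapping.lookup p m))"
  by (rule poly_mapping_eqI) (auto simp: lookup_sum lookup_single when_def in_keys_iff)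

lemma mpoly_eval_mult:
  assumes "is_ring_hom h"
  shows "mpoly_eval h s (p * q) = mpoly_eval h s p * mpoly_eval h s q"
proof -
  have h_mult: "\<And>a b. h (a * b) = h a * h b"
    using assms by (auto simp: is_ring_hom_def)
  have "p * q = (\<Sum>a\<in>Poly_Mapping.keys p. \<Sum>b\<in>Poly_Mapping.keys q.
                   Poly_Mapping.single (a + b) (Poly_Mapping.lookup p a * Poly_Mapping.lookup q b))"
    by (subst poly_mapping_sum_single[of p], subst poly_mapping_sum_single[of q])
       (simp add: sum_product mult_single)
  then have "mpoly_eval h s (p * q) = (\<Sum>a\<in>Poly_Mapping.keys p. \<Sum>b\<in>Poly_Mapping.keys q.
      h (Poly_Mapping.lookup p a) * monom_eval s a
        * (h (Poly_Mapping.lookup q b) * monom_eval s b))"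
    by (simp add: mpoly_eval_sum[OF assms] mpoly_eval_single[OF assms] h_mult monom_eval_add
        algebra_simps)
  then show ?thesis
    by (simp add: mpoly_eval_def sum_product)
qed

lemma is_ring_hom_mpoly_eval: "is_ring_hom h \<Longrightarrow> is_ring_hom (mpoly_eval h s)"
  by (simp add: is_ring_hom_def mpoly_eval_add mpoly_eval_mult)

lemma mpoly_eval_mvar [simp]: "is_ring_hom h \<Longrightarrow> mpoly_eval h s (mvar j) = s j"
  by (simp add: mvar_def mpoly_eval_single monom_eval_def is_ring_hom_def)

lemma mpoly_eval_mconst [simp]: "is_ring_hom h \<Longrightarrow> mpoly_eval h s (mconst c) = h c"
  by (simp add: mconst_def mpoly_eval_single monom_eval_def)

lemma ring_hom_mpoly_eval:
  assumes "is_ring_hom g"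
  shows "g (mpoly_eval h s p) = mpoly_eval (\<lambda>c. g (h c)) (\<lambda>j. g (s j)) p"
proof -
  have "g (a * b) = g a * g b" for a b
    using assms by (simp add: is_ring_hom_def)
  then show ?thesis
    by (simp add: mpoly_eval_def monom_eval_def ring_hom_sum[OF assms] ring_hom_prod[OF assms]
        ring_hom_power[OF assms])
qed

lemma mpoly_eval_mpoly_eval:
  assumes "is_ring_hom h"
  shows "mpoly_eval h t (mpoly_eval mconst s p) = mpoly_eval h (\<lambda>j. mpoly_eval h t (s j)) p"
  using ring_hom_mpoly_eval[OF is_ring_hom_mpoly_eval[OF assms]] assms by simp

lemma monom_eval_mvar: "monom_eval mvar m = Poly_Mapping.single m 1"
proof -
  have mvar_power: "mvar v ^ k = Poly_Mapping.single (Poly_Mapping.single v k) 1" for v k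
    by (induction k) (simp_all add: mvar_def mult_single single_add[symmetric] add.commute)
  have prod_single: "(\<Prod>x\<in>A. Poly_Mapping.single (f x) (1::rat)) = Poly_Mapping.single (\<Sum>x\<in>A. f x) 1"
    for A and f :: "nat \<Rightarrow> nat \<Rightarrow>\<^sub>0 nat"
    by (induction A rule: infinite_finite_induct) (simp_all add: mult_single)
  show ?thesis
    using poly_mapping_sum_single[of m]
    by (simp add: monom_eval_def mvar_power prod_single)
qed

lemma mpoly_eval_mconst_mvar [simp]: "mpoly_eval mconst mvar p = p"
  using poly_mapping_sum_single[of p]
  by (simp add: mpoly_eval_def monom_eval_mvar mconst_def mult_single)

section \<open>Substitution into rational functions\<close>

lemma u_eq_to_fract: "u j = to_fract (mvar j)"
  by (simp add: u_def to_fract_def)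

lemma poly_subst_eq_mpoly_eval: "poly_subst s p = mpoly_eval (\<lambda>c. to_fract (mconst c)) s p"
  by (simp add: poly_subst_def mpoly_eval_def monom_eval_def to_fract_def)

lemma is_ring_hom_to_fract_mconst: "is_ring_hom (\<lambda>c. to_fract (mconst c))"
  using is_ring_hom_mconst by (simp add: is_ring_hom_def)

lemma is_ring_hom_poly_subst: "is_ring_hom (poly_subst s)"
  unfolding poly_subst_eq_mpoly_eval[abs_def]
  by (rule is_ring_hom_mpoly_eval[OF is_ring_hom_to_fract_mconst])

lemma poly_subst_mvar [simp]: "poly_subst s (mvar j) = s j"
  by (simp add: poly_subst_eq_mpoly_eval is_ring_hom_to_fract_mconst)

lemma poly_subst_to_fract:
  "poly_subst (\<lambda>j. to_fract (t j)) p = to_fract (mpoly_eval mconst t p)"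
  unfolding poly_subst_eq_mpoly_eval
  by (rule ring_hom_mpoly_eval[OF is_ring_hom_to_fract, symmetric])

text \<open>Along these substitutions the choice of a representing fraction made in
  \<^const>\<open>rf_subst\<close> is immaterial.\<close>
definition nonvanishing_subst :: "(nat \<Rightarrow> ratfun) \<Rightarrow> bool" where
  "nonvanishing_subst s \<longleftrightarrow> (\<forall>p. p \<noteq> 0 \<longrightarrow> poly_subst s p \<noteq> 0)"

lemma nonvanishing_substI:
  assumes left_inverse: "\<And>j. mpoly_eval mconst t (s j) = mvar j"
  shows "nonvanishing_subst (\<lambda>j. to_fract (s j))"
  unfolding nonvanishing_subst_def
proof (intro allI impI)
  fix p :: mpoly
  assume "p \<noteq> 0"
  have "mpoly_eval mconst t (mpoly_eval mconst s p) = p"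
    by (simp add: mpoly_eval_mpoly_eval is_ring_hom_mconst left_inverse)
  with \<open>p \<noteq> 0\<close> show "poly_subst (\<lambda>j. to_fract (s j)) p \<noteq> 0"
    by (auto simp: poly_subst_to_fract)
qed

lemma nonvanishing_subst_relabel: "inj \<tau> \<Longrightarrow> nonvanishing_subst (\<lambda>j. u (\<tau> j))"
  unfolding u_eq_to_fract
  by (rule nonvanishing_substI[where t = "\<lambda>j. mvar (inv \<tau> j)"])
     (simp add: is_ring_hom_mconst)

lemma rf_subst_Fract:
  assumes s: "nonvanishing_subst s" and "b \<noteq> 0"
  shows "rf_subst s (Fract a b) = poly_subst s a / poly_subst s b"
  unfolding rf_subst_def
proof (rule some_equality)
  show "\<exists>a' b'. b' \<noteq> 0 \<and> Fract a b = Fract a' b' \<and>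
          poly_subst s a / poly_subst s b = poly_subst s a' / poly_subst s b'"
    using \<open>b \<noteq> 0\<close> by blast
next
  fix r
  assume "\<exists>a' b'. b' \<noteq> 0 \<and> Fract a b = Fract a' b' \<and> r = poly_subst s a' / poly_subst s b'"
  then obtain a' b' where "b' \<noteq> 0" "Fract a b = Fract a' b'"
    and r: "r = poly_subst s a' / poly_subst s b'"
    by blast
  then have "a * b' = a' * b"
    using \<open>b \<noteq> 0\<close> by (simp add: eq_fract)
  then have "poly_subst s a * poly_subst s b' = poly_subst s a' * poly_subst s b"
    using is_ring_hom_poly_subst[of s] by (metis is_ring_hom_def)
  moreover have "poly_subst s b \<noteq> 0" "poly_subst s b' \<noteq> 0"
    using s \<open>b \<noteq> 0\<close> \<open>b' \<noteq> 0\<close> by (auto simp: nonvanishing_subst_def)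
  ultimately show "r = poly_subst s a / poly_subst s b"
    by (simp add: r field_simps)
qed

lemma rf_subst_to_fract: "nonvanishing_subst s \<Longrightarrow> rf_subst s (to_fract p) = poly_subst s p"
  using is_ring_hom_poly_subst[of s] by (simp add: to_fract_def rf_subst_Fract is_ring_hom_def)

lemma rf_subst_0 [simp]: "nonvanishing_subst s \<Longrightarrow> rf_subst s 0 = 0"
  using rf_subst_to_fract[of s 0] is_ring_hom_poly_subst[of s] by (simp add: is_ring_hom_def)

lemma rf_subst_1 [simp]: "nonvanishing_subst s \<Longrightarrow> rf_subst s 1 = 1"
  using rf_subst_to_fract[of s 1] is_ring_hom_poly_subst[of s] by (simp add: is_ring_hom_def)

lemma rf_subst_mult:
  assumes "nonvanishing_subst s"
  shows "rf_subst s (x * y) = rf_subst s x * rf_subst s y"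
proof -
  obtain a b c d where "x = Fract a b" "b \<noteq> 0" "y = Fract c d" "d \<noteq> 0"
    by (metis Fract_cases)
  with assms is_ring_hom_poly_subst[of s] show ?thesis
    by (simp add: rf_subst_Fract is_ring_hom_def)
qed

lemma rf_subst_inverse:
  assumes "nonvanishing_subst s"
  shows "rf_subst s (inverse x) = inverse (rf_subst s x)"
proof -
  obtain a b where x: "x = Fract a b" "b \<noteq> 0"
    by (cases x)
  show ?thesis
  proof (cases "a = 0")
    case True
    with x assms show ?thesis
      by (simp add: fract_collapse)
  qed (use x assms in \<open>simp add: rf_subst_Fract\<close>)
qed

lemma rf_subst_powi:
  assumes "nonvanishing_subst s"
  shows "rf_subst s (x powi k) = rf_subst s x powi k"
proof -
  have "rf_subst s (y ^ n) = rf_subst s y ^ n" for y n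
    using assms by (induction n) (simp_all add: rf_subst_mult)
  then show ?thesis
    by (simp add: power_int_def rf_subst_inverse[OF assms])
qed

lemma rf_subst_prod:
  assumes "nonvanishing_subst s"
  shows "rf_subst s (\<Prod>x\<in>A. f x) = (\<Prod>x\<in>A. rf_subst s (f x))"
  using assms by (induction A rule: infinite_finite_induct) (simp_all add: rf_subst_mult)

section \<open>Images of formal fractions\<close>

lemma keys_FF:
  "F \<in> FF m \<Longrightarrow> S \<in> Poly_Mapping.keys F \<Longrightarrow> finite S \<and> S \<noteq> {} \<and> S \<subseteq> {1..m}"
  by (auto simp: FF_def intro: finite_subset)

lemma keys_ff_rename: "Poly_Mapping.keys (ff_rename g F) \<subseteq> g ` Poly_Mapping.keys F"
  unfolding ff_rename_def
  using keys_sum[of "\<lambda>S. Poly_Mapping.single (g S) (Poly_Mapping.lookup F S)" "Poly_Mapping.keys F"]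
  by (auto split: if_splits)

lemma phi_gen_superset:
  assumes "finite K" "Poly_Mapping.keys F \<subseteq> K"
  shows "phi_gen f F = (\<Prod>S\<in>K. f S powi Poly_Mapping.lookup F S)"
  unfolding phi_gen_def
  by (rule prod.mono_neutral_left) (use assms in \<open>auto simp: in_keys_iff\<close>)

lemma phi_gen_0 [simp]: "phi_gen f 0 = 1"
  by (simp add: phi_gen_def)

lemma phi_gen_single: "phi_gen f (Poly_Mapping.single S e) = f S powi e"
  by (cases "e = 0") (simp_all add: phi_gen_def)

lemma phi_gen_add:
  assumes "\<forall>S\<in>Poly_Mapping.keys F \<union> Poly_Mapping.keys G. f S \<noteq> 0"
  shows "phi_gen f (F + G) = phi_gen f F * phi_gen f G"
proof -
  let ?K = "Poly_Mapping.keys F \<union> Poly_Mapping.keys G"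
  have "phi_gen f (F + G) = (\<Prod>S\<in>?K. f S powi Poly_Mapping.lookup (F + G) S)"
    by (rule phi_gen_superset) (auto simp: keys_add)
  also have "\<dots> = (\<Prod>S\<in>?K. f S powi Poly_Mapping.lookup F S * f S powi Poly_Mapping.lookup G S)"
    by (rule prod.cong) (use assms in \<open>auto simp: lookup_add power_int_add\<close>)
  finally show ?thesis
    by (simp add: prod.distrib phi_gen_superset[of ?K])
qed

lemma phi_gen_sum:
  assumes "\<forall>x\<in>A. \<forall>S\<in>Poly_Mapping.keys (G x). f S \<noteq> 0"
  shows "phi_gen f (\<Sum>x\<in>A. G x) = (\<Prod>x\<in>A. phi_gen f (G x))"
  using assms
proof (induction A rule: infinite_finite_induct)
  case (insert x A)
  then have "\<forall>S\<in>Poly_Mapping.keys (G x) \<union> Poly_Mapping.keys (\<Sum>x\<in>A. G x). f S \<noteq> 0"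
    using keys_sum[of G A] by blast
  with insert show ?case
    by (simp add: phi_gen_add)
qed auto

lemma phi_gen_ff_rename:
  assumes "\<forall>S\<in>Poly_Mapping.keys F. f (g S) \<noteq> 0"
  shows "phi_gen f (ff_rename g F) = (\<Prod>S\<in>Poly_Mapping.keys F. f (g S) powi Poly_Mapping.lookup F S)"
  unfolding ff_rename_def
  by (subst phi_gen_sum) (use assms in \<open>auto simp: phi_gen_single\<close>)

lemma rf_subst_phi_gen:
  assumes "nonvanishing_subst s"
  shows "rf_subst s (phi_gen (\<lambda>S. to_fract (L S)) F)
           = (\<Prod>S\<in>Poly_Mapping.keys F. poly_subst s (L S) powi Poly_Mapping.lookup F S)"
  using assms by (simp add: phi_gen_def rf_subst_prod rf_subst_powi rf_subst_to_fract)

lemma mvars_add: "mvars (p + q) \<subseteq> mvars p \<union> mvars q"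
  unfolding mvars_def using keys_add[of p q] by blast

lemma mvars_diff: "mvars (p - q) \<subseteq> mvars p \<union> mvars q"
proof -
  have "mvars (- q) = mvars q"
    by (simp add: mvars_def)
  then show ?thesis
    using mvars_add[of p "- q"] by simp
qed

lemma mvars_mult: "mvars (p * q) \<subseteq> mvars p \<union> mvars q"
proof
  fix v
  assume "v \<in> mvars (p * q)"
  then obtain m where m: "m \<in> Poly_Mapping.keys (p * q)" "v \<in> Poly_Mapping.keys m"
    by (auto simp: mvars_def)
  then obtain a b where "a \<in> Poly_Mapping.keys p" "b \<in> Poly_Mapping.keys q" "m = a + b"
    using keys_mult[of p q] by blast
  with m(2) show "v \<in> mvars p \<union> mvars q"
    using keys_add[of a b] by (auto simp: mvars_def)
qed

lemma mvars_mvar [simp]: "mvars (mvar j) = {j}"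
  by (simp add: mvars_def mvar_def)

lemma mvars_0 [simp]: "mvars 0 = {}"
  by (simp add: mvars_def)

lemma mvars_1 [simp]: "mvars 1 = {}"
  by (simp add: mvars_def)

lemma mvars_sum: "(\<And>x. x \<in> A \<Longrightarrow> mvars (f x) \<subseteq> V) \<Longrightarrow> mvars (\<Sum>x\<in>A. f x) \<subseteq> V"
  by (induction A rule: infinite_finite_induct) (use mvars_add in fastforce)+

lemma mvars_prod: "(\<And>x. x \<in> A \<Longrightarrow> mvars (f x) \<subseteq> V) \<Longrightarrow> mvars (\<Prod>x\<in>A. f x) \<subseteq> V"
  by (induction A rule: infinite_finite_induct) (use mvars_mult in fastforce)+

lemma Mould_to_fract: "mvars p \<subseteq> {1..n} \<Longrightarrow> to_fract p \<in> Mould n"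
  unfolding Mould_def to_fract_def by (intro CollectI exI[of _ p] exI[of _ 1]) simp

lemma Mould_mult: "x \<in> Mould n \<Longrightarrow> y \<in> Mould n \<Longrightarrow> x * y \<in> Mould n"
  unfolding Mould_def
proof clarify
  fix a b c d :: mpoly
  assume "b \<noteq> 0" "mvars a \<subseteq> {1..n}" "mvars b \<subseteq> {1..n}"
     and "d \<noteq> 0" "mvars c \<subseteq> {1..n}" "mvars d \<subseteq> {1..n}"
  then show "\<exists>a' b'. b' \<noteq> 0 \<and> mvars a' \<subseteq> {1..n} \<and> mvars b' \<subseteq> {1..n} \<and>
               Fract a b * Fract c d = Fract a' b'"
    using mvars_mult[of a c] mvars_mult[of b d] by (intro exI[of _ "a * c"] exI[of _ "b * d"]) auto
qed

lemma Mould_inverse: "x \<in> Mould n \<Longrightarrow> inverse x \<in> Mould n"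
  unfolding Mould_def
proof clarify
  fix a b :: mpoly
  assume "b \<noteq> 0" "mvars a \<subseteq> {1..n}" "mvars b \<subseteq> {1..n}"
  then show "\<exists>a' b'. b' \<noteq> 0 \<and> mvars a' \<subseteq> {1..n} \<and> mvars b' \<subseteq> {1..n} \<and>
               inverse (Fract a b) = Fract a' b'"
  proof (cases "a = 0")
    case True
    then show ?thesis
      by (intro exI[of _ 0] exI[of _ 1]) (simp add: fract_collapse)
  qed auto
qed

lemma Mould_powi: "x \<in> Mould n \<Longrightarrow> x powi k \<in> Mould n"
proof -
  assume x: "x \<in> Mould n"
  have "y ^ j \<in> Mould n" if "y \<in> Mould n" for y j
    using that Mould_to_fract[of 1 n] by (induction j) (auto intro: Mould_mult)
  with x show ?thesis
    by (auto simp: power_int_def intro: Mould_inverse)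
qed

lemma Mould_prod: "(\<And>x. x \<in> A \<Longrightarrow> f x \<in> Mould n) \<Longrightarrow> (\<Prod>x\<in>A. f x) \<in> Mould n"
  using Mould_to_fract[of 1 n]
  by (induction A rule: infinite_finite_induct) (auto intro: Mould_mult)

definition block_subst :: "ratfun \<Rightarrow> nat \<Rightarrow> nat \<Rightarrow> nat \<Rightarrow> ratfun" where
  "block_subst Q i n k = (if k < i then u k else if k = i then Q else u (k + n - 1))"

lemma mould_comp_gen_eq:
  "mould_comp_gen P Q i F n G = P * rf_subst (block_subst Q i n) F * rf_subst (\<lambda>j. u (j + i - 1)) G"
  by (simp add: mould_comp_gen_def block_subst_def[abs_def])

lemma ff_blocks_nonempty: "n \<ge> 1 \<Longrightarrow> ff_blocks i n k \<noteq> {}"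
  by (auto simp: ff_blocks_def Sint_def)

lemma finite_ff_blocks: "finite (ff_blocks i n k)"
  by (simp add: ff_blocks_def Sint_def)

lemma ff_blocks_disjoint: "n \<ge> 1 \<Longrightarrow> k \<noteq> k' \<Longrightarrow> ff_blocks i n k \<inter> ff_blocks i n k' = {}"
  by (auto simp: ff_blocks_def Sint_def)

section \<open>Symbol polynomials\<close>

lemma prod_power_eq_0_iff_single:
  fixes e :: "'b \<Rightarrow> 'a::semidom"
  assumes "finite K" "S \<in> K" "e S = 0" "\<And>T. T \<in> K \<Longrightarrow> T \<noteq> S \<Longrightarrow> a T > 0 \<Longrightarrow> e T \<noteq> 0"
  shows "(\<Prod>T\<in>K. e T ^ a T) = 0 \<longleftrightarrow> a S > 0"
  using assms by auto

text \<open>\<open>L S\<close> is the polynomial that the symbol \<open>[S]\<close> is sent to.\<close>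
locale symbol_polys =
  fixes L :: "nat set \<Rightarrow> mpoly"
  assumes mvars_subset: "mvars (L S) \<subseteq> S"
    and poly_subst_relabel:
      "inj \<tau> \<Longrightarrow> finite S \<Longrightarrow> poly_subst (\<lambda>j. u (\<tau> j)) (L S) = to_fract (L (\<tau> ` S))"
    and separating_point: "finite S \<Longrightarrow> S \<noteq> {} \<Longrightarrow>
      \<exists>x::nat \<Rightarrow> real. mpoly_eval of_rat x (L S) = 0 \<and>
        (\<forall>T. finite T \<longrightarrow> \<not> T \<subseteq> S \<longrightarrow> mpoly_eval of_rat x (L T) \<noteq> 0)"
begin

abbreviation phi :: "ff \<Rightarrow> ratfun" where
  "phi \<equiv> phi_gen (\<lambda>S. to_fract (L S))"

lemma L_nonzero: "finite T \<Longrightarrow> T \<noteq> {} \<Longrightarrow> L T \<noteq> 0"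
proof
  assume T: "finite T" "T \<noteq> {}" and "L T = 0"
  obtain x :: "nat \<Rightarrow> real"
    where "\<forall>T'. finite T' \<longrightarrow> \<not> T' \<subseteq> {Suc (Max T)} \<longrightarrow> mpoly_eval of_rat x (L T') \<noteq> 0"
    using separating_point[of "{Suc (Max T)}"] by auto
  moreover have "\<not> T \<subseteq> {Suc (Max T)}"
    using Max_in[OF T] by auto
  ultimately show False
    using T \<open>L T = 0\<close> by force
qed

lemma phi_in_Mould: "F \<in> FF n \<Longrightarrow> phi F \<in> Mould n"
  unfolding phi_gen_def
  by (intro Mould_prod Mould_powi Mould_to_fract) (metis keys_FF mvars_subset order_trans)

lemma phi_add:
  assumes "\<And>S. S \<in> Poly_Mapping.keys F \<union> Poly_Mapping.keys G \<Longrightarrow> finite S \<and> S \<noteq> {}"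
  shows "phi (F + G) = phi F * phi G"
  using assms by (simp add: phi_gen_add L_nonzero)

lemma phi_ff_rename:
  assumes "nonvanishing_subst s"
    and "\<And>S. S \<in> Poly_Mapping.keys F \<Longrightarrow> poly_subst s (L S) = to_fract (L (g S)) \<and> L (g S) \<noteq> 0"
  shows "phi (ff_rename g F) = rf_subst s (phi F)"
  using assms by (simp add: rf_subst_phi_gen phi_gen_ff_rename)

lemma phi_ff_act:
  assumes "\<sigma> permutes {1..n}" "F \<in> FF n"
  shows "phi (ff_act \<sigma> F) = mould_act \<sigma> (phi F)"
proof -
  have "inj \<sigma>"
    using assms(1) by (rule permutes_inj)
  have "finite S \<and> S \<noteq> {}" if "S \<in> Poly_Mapping.keys F" for S
    using keys_FF[OF assms(2) that] by blast
  then show ?thesis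
    unfolding ff_act_def mould_act_def
    by (intro phi_ff_rename nonvanishing_subst_relabel \<open>inj \<sigma>\<close>)
       (simp add: poly_subst_relabel[OF \<open>inj \<sigma>\<close>] L_nonzero)
qed

lemma phi_ff_comp:
  assumes "n \<ge> 1" "i \<ge> 1" "F \<in> FF m" "G \<in> FF n"
    and block_nonvanishing: "nonvanishing_subst (block_subst Q i n)"
    and block_subst_L: "\<And>S. finite S \<Longrightarrow>
          poly_subst (block_subst Q i n) (L S) = to_fract (L (\<Union>k\<in>S. ff_blocks i n k))"
  shows "phi (ff_comp i F n G) = mould_comp_gen (to_fract (L (Sint i n))) Q i (phi F) n (phi G)"
proof -
  let ?shift = "\<lambda>j::nat. j + i - 1"
  let ?A = "Poly_Mapping.single (Sint i n) (1::int)"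
  let ?B = "ff_rename (\<lambda>S. \<Union>k\<in>S. ff_blocks i n k) F"
  let ?C = "ff_rename (\<lambda>S. ?shift ` S) G"
  have "inj ?shift"
    using \<open>i \<ge> 1\<close> by (auto simp: inj_def)
  have keys_F: "finite S \<and> S \<noteq> {}" if "S \<in> Poly_Mapping.keys F" for S
    using keys_FF[OF \<open>F \<in> FF m\<close> that] by blast
  have keys_G: "finite S \<and> S \<noteq> {}" if "S \<in> Poly_Mapping.keys G" for S
    using keys_FF[OF \<open>G \<in> FF n\<close> that] by blast
  have keys_A: "finite S \<and> S \<noteq> {}" if "S \<in> Poly_Mapping.keys ?A" for S
    using that \<open>n \<ge> 1\<close> by (simp add: Sint_def split: if_splits)
  have keys_B: "finite S \<and> S \<noteq> {}" if S: "S \<in> Poly_Mapping.keys ?B" for S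
  proof -
    obtain T where "T \<in> Poly_Mapping.keys F" "S = (\<Union>k\<in>T. ff_blocks i n k)"
      using S keys_ff_rename by blast
    then show ?thesis
      using keys_F[of T] ff_blocks_nonempty[OF \<open>n \<ge> 1\<close>] finite_ff_blocks by auto
  qed
  have keys_C: "finite S \<and> S \<noteq> {}" if "S \<in> Poly_Mapping.keys ?C" for S
    using that keys_ff_rename keys_G by blast
  have "phi (?A + ?B) = phi ?A * phi ?B"
    by (rule phi_add) (use keys_A keys_B in blast)
  moreover have "phi (?A + ?B + ?C) = phi (?A + ?B) * phi ?C"
    by (rule phi_add) (use keys_A keys_B keys_C keys_add[of ?A ?B] in blast)
  ultimately have "phi (?A + ?B + ?C) = phi ?A * phi ?B * phi ?C"
    by simp
  moreover have "phi ?B = rf_subst (block_subst Q i n) (phi F)"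
    using keys_F ff_blocks_nonempty[OF \<open>n \<ge> 1\<close>] finite_ff_blocks
    by (intro phi_ff_rename block_nonvanishing) (auto simp: block_subst_L L_nonzero)
  moreover have "phi ?C = rf_subst (\<lambda>j. u (?shift j)) (phi G)"
    using keys_G \<open>inj ?shift\<close>
    by (intro phi_ff_rename nonvanishing_subst_relabel) (auto simp: poly_subst_relabel L_nonzero)
  ultimately show ?thesis
    by (simp add: ff_comp_def mould_comp_gen_eq phi_gen_single)
qed

lemma prod_powers_eq_imp_exponents_eq:
  assumes "finite K" and K: "\<And>S. S \<in> K \<Longrightarrow> finite S \<and> S \<noteq> {}"
    and eq: "(\<Prod>S\<in>K. L S ^ a S) = (\<Prod>S\<in>K. L S ^ b S)"
    and disjoint_supports: "\<And>S. S \<in> K \<Longrightarrow> a S = 0 \<or> b S = 0"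
    and "S \<in> K"
  shows "a S = b S"
proof (rule ccontr)
  assume "a S \<noteq> b S"
  define Z where "Z = {T\<in>K. a T \<noteq> b T}"
  have "finite Z" "Z \<noteq> {}"
    using \<open>finite K\<close> \<open>S \<in> K\<close> \<open>a S \<noteq> b S\<close> by (auto simp: Z_def)
  then obtain S0 where "S0 \<in> Z" and minimal: "\<And>T. T \<in> Z \<Longrightarrow> T \<subseteq> S0 \<Longrightarrow> S0 = T"
    using finite_has_minimal[of Z] by auto
  then have "S0 \<in> K" "a S0 \<noteq> b S0"
    by (auto simp: Z_def)
  then obtain x :: "nat \<Rightarrow> real" where x_S0: "mpoly_eval of_rat x (L S0) = 0"
    and x_T: "\<And>T. finite T \<Longrightarrow> \<not> T \<subseteq> S0 \<Longrightarrow> mpoly_eval of_rat x (L T) \<noteq> 0"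
    using separating_point[of S0] K[of S0] by blast
  let ?e = "\<lambda>T. mpoly_eval of_rat x (L T)"
  have nonvanishing: "?e T \<noteq> 0" if "T \<in> K" "T \<noteq> S0" "a T > 0 \<or> b T > 0" for T
  proof -
    have "T \<in> Z"
      using that disjoint_supports[OF \<open>T \<in> K\<close>] by (auto simp: Z_def)
    then have "\<not> T \<subseteq> S0"
      using minimal \<open>T \<noteq> S0\<close> by blast
    then show ?thesis
      using x_T K[OF \<open>T \<in> K\<close>] by blast
  qed
  have hom: "is_ring_hom (mpoly_eval (of_rat :: rat \<Rightarrow> real) x)"
    by (intro is_ring_hom_mpoly_eval is_ring_hom_of_rat)
  have "(\<Prod>T\<in>K. ?e T ^ a T) = (\<Prod>T\<in>K. ?e T ^ b T)"
    using arg_cong[OF eq, of "mpoly_eval of_rat x"]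
    by (simp add: ring_hom_prod[OF hom] ring_hom_power[OF hom])
  moreover have "(\<Prod>T\<in>K. ?e T ^ a T) = 0 \<longleftrightarrow> a S0 > 0"
    by (rule prod_power_eq_0_iff_single[of K S0 ?e])
       (use \<open>finite K\<close> \<open>S0 \<in> K\<close> x_S0 nonvanishing in auto)
  moreover have "(\<Prod>T\<in>K. ?e T ^ b T) = 0 \<longleftrightarrow> b S0 > 0"
    by (rule prod_power_eq_0_iff_single[of K S0 ?e])
       (use \<open>finite K\<close> \<open>S0 \<in> K\<close> x_S0 nonvanishing in auto)
  ultimately show False
    using \<open>a S0 \<noteq> b S0\<close> disjoint_supports[OF \<open>S0 \<in> K\<close>] by auto
qed

lemma prod_powi_eq_1_imp_exponents_eq_0:
  assumes "finite K" and K: "\<And>S. S \<in> K \<Longrightarrow> finite S \<and> S \<noteq> {}"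
    and one: "(\<Prod>S\<in>K. to_fract (L S) powi c S) = 1"
    and "S \<in> K"
  shows "c S = 0"
proof -
  let ?f = "\<lambda>S. to_fract (L S)"
  \<comment> \<open>split the exponents into their positive and negative parts to clear denominators\<close>
  have "x powi k = x ^ nat k / x ^ nat (- k)" for x :: ratfun and k
    by (cases "k \<ge> 0") (auto simp: power_int_def field_simps)
  with one have "(\<Prod>S\<in>K. ?f S ^ nat (c S)) / (\<Prod>S\<in>K. ?f S ^ nat (- c S)) = 1"
    by (simp add: prod_dividef)
  then have "to_fract (\<Prod>S\<in>K. L S ^ nat (c S)) = to_fract (\<Prod>S\<in>K. L S ^ nat (- c S))"
    unfolding ring_hom_prod[OF is_ring_hom_to_fract] ring_hom_power[OF is_ring_hom_to_fract]
    by simp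
  then have eq_polys: "(\<Prod>S\<in>K. L S ^ nat (c S)) = (\<Prod>S\<in>K. L S ^ nat (- c S))"
    by simp
  have "nat (c T) = 0 \<or> nat (- c T) = 0" for T
    by linarith
  then show ?thesis
    using prod_powers_eq_imp_exponents_eq[OF \<open>finite K\<close> K eq_polys _ \<open>S \<in> K\<close>] by simp
qed

lemma inj_on_phi: "inj_on phi (FF n)"
proof (rule inj_onI)
  fix F G
  assume "F \<in> FF n" "G \<in> FF n" and eq: "phi F = phi G"
  define K where "K = Poly_Mapping.keys F \<union> Poly_Mapping.keys G"
  define c where "c S = Poly_Mapping.lookup F S - Poly_Mapping.lookup G S" for S
  let ?f = "\<lambda>S. to_fract (L S)"
  have "finite K"
    by (simp add: K_def)
  have K: "finite S \<and> S \<noteq> {}" if "S \<in> K" for S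
    using that keys_FF[OF \<open>F \<in> FF n\<close>] keys_FF[OF \<open>G \<in> FF n\<close>] by (auto simp: K_def)
  then have nonzero_K: "?f S \<noteq> 0" if "S \<in> K" for S
    using that L_nonzero by simp
  have phi_F: "phi F = (\<Prod>S\<in>K. ?f S powi Poly_Mapping.lookup F S)"
    and phi_G: "phi G = (\<Prod>S\<in>K. ?f S powi Poly_Mapping.lookup G S)"
    by (rule phi_gen_superset; simp add: K_def)+
  have "phi G \<noteq> 0"
    unfolding phi_G using \<open>finite K\<close> nonzero_K by simp
  have "?f S powi c S = ?f S powi Poly_Mapping.lookup F S / ?f S powi Poly_Mapping.lookup G S"
    if "S \<in> K" for S
    unfolding c_def by (rule power_int_diff) (use nonzero_K[OF that] in simp)
  then have "(\<Prod>S\<in>K. ?f S powi c S)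
             = (\<Prod>S\<in>K. ?f S powi Poly_Mapping.lookup F S / ?f S powi Poly_Mapping.lookup G S)"
    by (rule prod.cong[OF refl])
  also have "\<dots> = phi F / phi G"
    by (simp add: prod_dividef phi_F phi_G)
  also have "\<dots> = 1"
    using eq \<open>phi G \<noteq> 0\<close> by simp
  finally have "c S = 0" if "S \<in> K" for S
    using prod_powi_eq_1_imp_exponents_eq_0[OF \<open>finite K\<close> K _ that] by simp
  then show "F = G"
    by (intro poly_mapping_eqI) (metis K_def Un_iff c_def eq_iff_diff_eq_0 in_keys_iff)
qed

end

section \<open>The additive and the multiplicative symbols\<close>

definition sum_vars :: "nat set \<Rightarrow> mpoly" where
  "sum_vars S = (\<Sum>j\<in>S. mvar j)"

definition prod_vars_minus_one :: "nat set \<Rightarrow> mpoly" where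
  "prod_vars_minus_one S = (\<Prod>j\<in>S. mvar j) - 1"

lemma mpoly_eval_sum_vars: "is_ring_hom h \<Longrightarrow> mpoly_eval h s (sum_vars S) = (\<Sum>j\<in>S. s j)"
  by (simp add: sum_vars_def ring_hom_sum is_ring_hom_mpoly_eval)

lemma mpoly_eval_prod_vars_minus_one:
  "is_ring_hom h \<Longrightarrow> mpoly_eval h s (prod_vars_minus_one S) = (\<Prod>j\<in>S. s j) - 1"
  by (simp add: prod_vars_minus_one_def ring_hom_diff ring_hom_prod is_ring_hom_mpoly_eval)

lemma poly_subst_sum_vars: "poly_subst s (sum_vars S) = (\<Sum>j\<in>S. s j)"
  by (simp add: sum_vars_def ring_hom_sum[OF is_ring_hom_poly_subst])

lemma poly_subst_prod_vars_minus_one: "poly_subst s (prod_vars_minus_one S) = (\<Prod>j\<in>S. s j) - 1"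
  using is_ring_hom_poly_subst[of s]
  by (simp add: prod_vars_minus_one_def ring_hom_diff ring_hom_prod) (simp add: is_ring_hom_def)

lemma to_fract_sum_vars: "to_fract (sum_vars S) = (\<Sum>j\<in>S. u j)"
  by (simp add: sum_vars_def ring_hom_sum[OF is_ring_hom_to_fract] u_eq_to_fract)

lemma to_fract_prod_vars_minus_one: "to_fract (prod_vars_minus_one S) = (\<Prod>j\<in>S. u j) - 1"
  by (simp add: prod_vars_minus_one_def ring_hom_prod[OF is_ring_hom_to_fract] u_eq_to_fract)

lemma poly_subst_sum_vars_blocks:
  assumes "finite S" "\<And>k. k \<in> S \<Longrightarrow> finite (B k)"
    and "\<And>k k'. k \<in> S \<Longrightarrow> k' \<in> S \<Longrightarrow> k \<noteq> k' \<Longrightarrow> B k \<inter> B k' = {}"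
  shows "poly_subst (\<lambda>k. \<Sum>j\<in>B k. u j) (sum_vars S) = to_fract (sum_vars (\<Union>k\<in>S. B k))"
  using assms by (simp add: poly_subst_sum_vars to_fract_sum_vars sum.UNION_disjoint)

lemma poly_subst_prod_vars_minus_one_blocks:
  assumes "finite S" "\<And>k. k \<in> S \<Longrightarrow> finite (B k)"
    and "\<And>k k'. k \<in> S \<Longrightarrow> k' \<in> S \<Longrightarrow> k \<noteq> k' \<Longrightarrow> B k \<inter> B k' = {}"
  shows "poly_subst (\<lambda>k. \<Prod>j\<in>B k. u j) (prod_vars_minus_one S)
           = to_fract (prod_vars_minus_one (\<Union>k\<in>S. B k))"
  using assms
  by (simp add: poly_subst_prod_vars_minus_one to_fract_prod_vars_minus_one prod.UNION_disjoint)

lemma sum_vars_separating_point: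
  assumes "finite S" "S \<noteq> {}"
  shows "\<exists>x::nat \<Rightarrow> real. mpoly_eval of_rat x (sum_vars S) = 0 \<and>
           (\<forall>T. finite T \<longrightarrow> \<not> T \<subseteq> S \<longrightarrow> mpoly_eval of_rat x (sum_vars T) \<noteq> 0)"
proof -
  obtain j0 where "j0 \<in> S"
    using assms(2) by blast
  have "card S \<ge> 1"
    using assms by (simp add: Suc_le_eq card_gt_0_iff)
  define N where "N = real (card S)"
  have "N \<ge> 1"
    using \<open>card S \<ge> 1\<close> by (simp add: N_def)
  \<comment> \<open>the coordinates in \<open>S\<close> sum to zero; any coordinate outside \<open>S\<close> outweighs the negative one\<close>
  define x where "x j = (if j \<in> S then (if j = j0 then 1 - N else 1) else N)" for j
  have eval: "mpoly_eval of_rat x (sum_vars T) = (\<Sum>j\<in>T. x j)" for T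
    by (simp add: mpoly_eval_sum_vars is_ring_hom_of_rat)
  have "(\<Sum>j\<in>S. x j) = x j0 + (\<Sum>j\<in>S - {j0}. x j)"
    using assms(1) \<open>j0 \<in> S\<close> by (simp add: sum.remove)
  also have "\<dots> = 0"
    using \<open>j0 \<in> S\<close> \<open>card S \<ge> 1\<close> by (simp add: x_def N_def card_Diff_singleton)
  finally have "(\<Sum>j\<in>S. x j) = 0" .
  moreover have "(\<Sum>j\<in>T. x j) \<ge> 1" if "finite T" "\<not> T \<subseteq> S" for T
  proof -
    have "1 - N \<le> (\<Sum>j\<in>T \<inter> S. if j = j0 then 1 - N else 0)"
      using that(1) \<open>N \<ge> 1\<close> by simp
    also have "\<dots> \<le> (\<Sum>j\<in>T \<inter> S. x j)"
      by (rule sum_mono) (simp add: x_def)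
    finally have inside: "1 - N \<le> (\<Sum>j\<in>T \<inter> S. x j)" .
    have "card (T - S) \<ge> 1"
      using that by (simp add: Suc_le_eq card_gt_0_iff)
    then have outside: "(\<Sum>j\<in>T - S. x j) \<ge> N"
      using \<open>N \<ge> 1\<close> mult_left_mono[of 1 "real (card (T - S))" N] by (simp add: x_def)
    have "(\<Sum>j\<in>T. x j) = (\<Sum>j\<in>T \<inter> S. x j) + (\<Sum>j\<in>T - S. x j)"
      using that(1) by (rule sum.Int_Diff)
    with inside outside show ?thesis
      by linarith
  qed
  ultimately show ?thesis
    by (intro exI[of _ x]) (fastforce simp: eval)
qed

lemma prod_vars_minus_one_separating_point:
  assumes "finite S"
  shows "\<exists>x::nat \<Rightarrow> real. mpoly_eval of_rat x (prod_vars_minus_one S) = 0 \<and>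
           (\<forall>T. finite T \<longrightarrow> \<not> T \<subseteq> S \<longrightarrow> mpoly_eval of_rat x (prod_vars_minus_one T) \<noteq> 0)"
proof -
  define x :: "nat \<Rightarrow> real" where "x j = (if j \<in> S then 1 else 2)" for j
  have "(\<Prod>j\<in>T. x j) \<ge> 2" if "finite T" "\<not> T \<subseteq> S" for T
  proof -
    have "(\<Prod>j\<in>T. x j) = (\<Prod>j\<in>T \<inter> S. x j) * (\<Prod>j\<in>T - S. x j)"
      using that(1) by (metis prod.Int_Diff)
    also have "\<dots> = 2 ^ card (T - S)"
      by (simp add: x_def)
    also have "\<dots> \<ge> 2 ^ 1"
      using that by (intro power_increasing) (auto simp: Suc_le_eq card_gt_0_iff)
    finally show ?thesis
      by simp
  qed
  then show ?thesis
    by (intro exI[of _ x]) (force simp: mpoly_eval_prod_vars_minus_one is_ring_hom_of_rat x_def)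
qed

interpretation additive: symbol_polys sum_vars
proof
  show "mvars (sum_vars S) \<subseteq> S" for S
    unfolding sum_vars_def by (rule mvars_sum) simp
  show "poly_subst (\<lambda>j. u (\<tau> j)) (sum_vars S) = to_fract (sum_vars (\<tau> ` S))"
    if "inj \<tau>" "finite S" for \<tau> S
    using poly_subst_sum_vars_blocks[of S "\<lambda>k. {\<tau> k}"] that
    by (simp add: inj_eq UNION_singleton_eq_range)
qed (fact sum_vars_separating_point)

interpretation multiplicative: symbol_polys prod_vars_minus_one
proof
  show "mvars (prod_vars_minus_one S) \<subseteq> S" for S
    unfolding prod_vars_minus_one_def
    using mvars_diff[of "\<Prod>j\<in>S. mvar j" 1] mvars_prod[of S mvar S] by auto
  show "poly_subst (\<lambda>j. u (\<tau> j)) (prod_vars_minus_one S) = to_fract (prod_vars_minus_one (\<tau> ` S))"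
    if "inj \<tau>" "finite S" for \<tau> S
    using poly_subst_prod_vars_minus_one_blocks[of S "\<lambda>k. {\<tau> k}"] that
    by (simp add: inj_eq UNION_singleton_eq_range)
qed (use prod_vars_minus_one_separating_point in blast)

lemma phi0_eq: "phi0 = additive.phi"
  by (simp add: phi0_def to_fract_sum_vars)

lemma phi1_eq: "phi1 = multiplicative.phi"
  by (simp add: phi1_def to_fract_prod_vars_minus_one)

lemma block_subst_Sigma_in: "block_subst (Sigma_in i n) i n = (\<lambda>k. \<Sum>j\<in>ff_blocks i n k. u j)"
  by (simp add: fun_eq_iff block_subst_def ff_blocks_def Sigma_in_def)

lemma block_subst_Pi_in: "block_subst (Pi_in i n) i n = (\<lambda>k. \<Prod>j\<in>ff_blocks i n k. u j)"
  by (simp add: fun_eq_iff block_subst_def ff_blocks_def Pi_in_def)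

text \<open>Collapses each block \<open>ff_blocks i n k\<close> back to the single variable \<open>u k\<close>: the block
  representative goes to \<open>u k\<close> and every other member of \<open>Sint i n\<close> to the neutral element \<open>e\<close>.\<close>
definition block_retraction :: "mpoly \<Rightarrow> nat \<Rightarrow> nat \<Rightarrow> nat \<Rightarrow> mpoly" where
  "block_retraction e i n j = (if j \<le> i then mvar j else if j < i + n then e else mvar (j + 1 - n))"

lemma block_retraction_on_block:
  assumes "n \<ge> 1"
  shows "\<exists>r\<in>ff_blocks i n k. \<forall>j\<in>ff_blocks i n k.
           block_retraction e i n j = (if j = r then mvar k else e)"
proof
  let ?r = "if k \<le> i then k else k + n - 1"
  show "?r \<in> ff_blocks i n k"
    using assms by (auto simp: ff_blocks_def Sint_def)
  show "\<forall>j\<in>ff_blocks i n k. block_retraction e i n j = (if j = ?r then mvar k else e)"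
    using assms by (auto simp: block_retraction_def ff_blocks_def Sint_def split: if_splits)
qed

lemma nonvanishing_block_subst_Sigma_in:
  assumes "n \<ge> 1"
  shows "nonvanishing_subst (block_subst (Sigma_in i n) i n)"
proof -
  have "mpoly_eval mconst (block_retraction 0 i n) (sum_vars (ff_blocks i n k)) = mvar k" for k
  proof -
    obtain r where "r \<in> ff_blocks i n k"
      and "\<And>j. j \<in> ff_blocks i n k \<Longrightarrow> block_retraction 0 i n j = (if j = r then mvar k else 0)"
      using block_retraction_on_block[OF assms, where i = i and k = k and e = 0] by blast
    then show ?thesis
      by (simp add: mpoly_eval_sum_vars is_ring_hom_mconst finite_ff_blocks)
  qed
  then have "nonvanishing_subst (\<lambda>k. to_fract (sum_vars (ff_blocks i n k)))"
    by (rule nonvanishing_substI)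
  then show ?thesis
    by (simp add: block_subst_Sigma_in to_fract_sum_vars)
qed

lemma nonvanishing_block_subst_Pi_in:
  assumes "n \<ge> 1"
  shows "nonvanishing_subst (block_subst (Pi_in i n) i n)"
proof -
  have "mpoly_eval mconst (block_retraction 1 i n) (\<Prod>j\<in>ff_blocks i n k. mvar j) = mvar k" for k
  proof -
    obtain r where "r \<in> ff_blocks i n k"
      and "\<And>j. j \<in> ff_blocks i n k \<Longrightarrow> block_retraction 1 i n j = (if j = r then mvar k else 1)"
      using block_retraction_on_block[OF assms, where i = i and k = k and e = 1] by blast
    then show ?thesis
      by (simp add: ring_hom_prod is_ring_hom_mpoly_eval is_ring_hom_mconst finite_ff_blocks)
  qed
  then have "nonvanishing_subst (\<lambda>k. to_fract (\<Prod>j\<in>ff_blocks i n k. mvar j))"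
    by (rule nonvanishing_substI)
  then show ?thesis
    by (simp add: block_subst_Pi_in ring_hom_prod[OF is_ring_hom_to_fract] u_eq_to_fract)
qed

lemma phi0_ff_comp:
  assumes "n \<ge> 1" "i \<ge> 1" "F \<in> FF m" "G \<in> FF n"
  shows "phi0 (ff_comp i F n G) = mould0_comp i (phi0 F) n (phi0 G)"
proof -
  have "poly_subst (block_subst (Sigma_in i n) i n) (sum_vars S)
          = to_fract (sum_vars (\<Union>k\<in>S. ff_blocks i n k))" if "finite S" for S
    unfolding block_subst_Sigma_in
    using that finite_ff_blocks ff_blocks_disjoint[OF \<open>n \<ge> 1\<close>] by (rule poly_subst_sum_vars_blocks)
  moreover have "to_fract (sum_vars (Sint i n)) = Sigma_in i n"
    by (simp add: to_fract_sum_vars Sigma_in_def)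
  ultimately show ?thesis
    unfolding phi0_eq mould0_comp_def
    using additive.phi_ff_comp[OF assms nonvanishing_block_subst_Sigma_in[OF \<open>n \<ge> 1\<close>]] by simp
qed

lemma phi1_ff_comp:
  assumes "n \<ge> 1" "i \<ge> 1" "F \<in> FF m" "G \<in> FF n"
  shows "phi1 (ff_comp i F n G) = mould1_comp i (phi1 F) n (phi1 G)"
proof -
  have "poly_subst (block_subst (Pi_in i n) i n) (prod_vars_minus_one S)
          = to_fract (prod_vars_minus_one (\<Union>k\<in>S. ff_blocks i n k))" if "finite S" for S
    unfolding block_subst_Pi_in
    using that finite_ff_blocks ff_blocks_disjoint[OF \<open>n \<ge> 1\<close>]
    by (rule poly_subst_prod_vars_minus_one_blocks)
  moreover have "to_fract (prod_vars_minus_one (Sint i n)) = Pi_in i n - 1"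
    by (simp add: to_fract_prod_vars_minus_one Pi_in_def)
  ultimately show ?thesis
    unfolding phi1_eq mould1_comp_def
    using multiplicative.phi_ff_comp[OF assms nonvanishing_block_subst_Pi_in[OF \<open>n \<ge> 1\<close>]] by simp
qed

theorem mainTheorem2:
  shows "injective_sym_operad_morphism phi0 mould0_comp \<and>
         injective_sym_operad_morphism phi1 mould1_comp"
  unfolding injective_sym_operad_morphism_def
  using phi0_ff_comp phi1_ff_comp
  by (simp add: phi0_eq phi1_eq additive.phi_in_Mould multiplicative.phi_in_Mould
      additive.phi_ff_act multiplicative.phi_ff_act additive.inj_on_phi multiplicative.inj_on_phi)

end
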